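(* A term $t$ of the silly substitution calculus is weakly $\to_w$-normalizing if and only if it is strongly $\to_w$-normalizing.
   Context: Terms: $t ::= x \mid \lambda x.t \mid t\,u \mid t[x\backslash u]$ ($t[x\backslash u]$ an explicit substitution binding $x$ in $t$; terms up to $\alpha$). Values $v ::= \lambda x.t$. Substitution contexts $S ::= \langle\cdot\rangle\mid S[x\backslash u]$. Weak contexts $W ::= \langle\cdot\rangle \mid W\,t \mid t\,W \mid t[x\backslash W] \mid W[x\backslash u]$; $W\langle\langle t\rangle\rangle$ is plugging without capture of free variables of $t$. Root rules: $S\langle\lambda x.t\rangle u\mapsto_m S\langle t[x\backslash u]\rangle$; $W\langle\langle x\rangle\rangle[x\backslash u]\mapsto_e W\langle\langle u\rangle\rangle[x\backslash u]$; $t[x\backslash S\langle v\rangle]\mapsto_{gcv} S\langle t\rangle$ if $x\notin\mathrm{fv}(t)$. $\to_w$ is the union of their closures under weak contexts. Weakly normalizing: some reduction sequence reaches a normal form; strongly normalizing: no infinite reduction sequence. *)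

theory Defs
  imports Main
begin

text \<open>Terms of the silly substitution calculus, up to alpha-equivalence, represented
with de Bruijn indices. Sub t u is the explicit substitution t[x\u], binding index 0 in t.\<close>

datatype trm = Var nat | Lam trm | App trm trm | Sub trm trm

fun lift :: "nat \<Rightarrow> nat \<Rightarrow> trm \<Rightarrow> trm" where
  "lift k c (Var i) = Var (if i < c then i else i + k)"
| "lift k c (Lam t) = Lam (lift k (Suc c) t)"
| "lift k c (App t u) = App (lift k c t) (lift k c u)"
| "lift k c (Sub t u) = Sub (lift k (Suc c) t) (lift k c u)"

text \<open>Substitution contexts S ::= <.> | S[x\u], represented as the list of the
substituted terms, outermost first: plugS [u1,...,uk] t = t[.\uk]...[.\u1].\<close>
fun plugS :: "trm list \<Rightarrow> trm \<Rightarrow> trm" where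
  "plugS [] t = t"
| "plugS (u # us) t = Sub (plugS us t) u"

datatype wctx = Hole | AppL wctx trm | AppR trm wctx | SubArg trm wctx | SubBody wctx trm

fun plugW :: "wctx \<Rightarrow> trm \<Rightarrow> trm" where
  "plugW Hole t = t"
| "plugW (AppL W u) t = App (plugW W t) u"
| "plugW (AppR u W) t = App u (plugW W t)"
| "plugW (SubArg u W) t = Sub u (plugW W t)"
| "plugW (SubBody W u) t = Sub (plugW W t) u"

fun depthW :: "wctx \<Rightarrow> nat" where
  "depthW Hole = 0"
| "depthW (AppL W u) = depthW W"
| "depthW (AppR u W) = depthW W"
| "depthW (SubArg u W) = depthW W"
| "depthW (SubBody W u) = Suc (depthW W)"

text \<open>Capture-avoiding plugging is realised by shifting.
 m:   S<\<lambda>x.t> u \<mapsto> S<t[x\u]>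
 e:   W<<x>>[x\u] \<mapsto> W<<u>>[x\u]
 gcv: t[x\S<v>] \<mapsto> S<t>  if x \<notin> fv(t)  (i.e. the body is a shifted term).\<close>
inductive root_step :: "trm \<Rightarrow> trm \<Rightarrow> bool" where
  rule_m: "root_step (App (plugS S (Lam t)) u) (plugS S (Sub t (lift (length S) 0 u)))"
| rule_e: "root_step (Sub (plugW W (Var (depthW W))) u)
                     (Sub (plugW W (lift (Suc (depthW W)) 0 u)) u)"
| rule_gcv: "root_step (Sub (lift 1 0 t) (plugS S (Lam s))) (plugS S (lift (length S) 0 t))"

inductive wstep :: "trm \<Rightarrow> trm \<Rightarrow> bool" where
  "root_step t u \<Longrightarrow> wstep (plugW W t) (plugW W u)"

definition normal_w :: "trm \<Rightarrow> bool" where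
  "normal_w t \<longleftrightarrow> \<not> (\<exists>u. wstep t u)"

definition WN_w :: "trm \<Rightarrow> bool" where
  "WN_w t \<longleftrightarrow> (\<exists>u. wstep\<^sup>*\<^sup>* t u \<and> normal_w u)"

definition SN_w :: "trm \<Rightarrow> bool" where
  "SN_w t \<longleftrightarrow> \<not> (\<exists>f. f 0 = t \<and> (\<forall>n. wstep (f n) (f (Suc n))))"

end

theory Submission
  imports Defs "HOL-Library.Multiset" "HOL-Library.Function_Algebras"
begin

text \<open>The proof uses non-idempotent intersection types whose derivations record their size.
  If \<open>t\<close> has a derivation of size \<open>n\<close> and \<open>t \<rightarrow>\<^sub>w t'\<close>, then \<open>t'\<close> has a derivation of size
  less than \<open>n\<close>, and typability is preserved backwards along \<open>\<rightarrow>\<^sub>w\<close>. All weak normal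
  forms are typable, so a weakly normalizing term is typable and therefore strongly normalizing;
  the converse holds for every relation.\<close>

datatype ty = Star | Arr "ty multiset" ty

type_synonym env = "nat \<Rightarrow> ty multiset"

definition env_shift :: "nat \<Rightarrow> nat \<Rightarrow> env \<Rightarrow> env" where
  "env_shift k c G = (\<lambda>j. if j < c then G j else if j < c + k then {#} else G (j - k))"

definition env_drop :: "nat \<Rightarrow> env \<Rightarrow> env" where
  "env_drop k G = (\<lambda>j. G (j + k))"

definition env_le :: "env \<Rightarrow> env \<Rightarrow> bool" where
  "env_le G D \<longleftrightarrow> (\<forall>j. G j \<subseteq># D j)"

text \<open>Rule induction and inversion can leave environments eta-expanded in goals and facts. With
  pointwise evaluation in the simpset, the simplifier would then unfold them, and they would no
  longer match the environments built by the typing rules. Pointwise reasoning is therefore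
  requested explicitly via \<open>env_eq_iff\<close>.\<close>

declare plus_fun_apply [simp del] zero_fun_apply [simp del]

lemma env_shift_apply:
  "env_shift k c G j = (if j < c then G j else if j < c + k then {#} else G (j - k))"
  by (simp add: env_shift_def)

lemma env_drop_apply: "env_drop k G j = G (j + k)"
  by (simp add: env_drop_def)

lemmas env_eq_iff = fun_eq_iff plus_fun_apply zero_fun_apply env_shift_apply env_drop_apply

lemma env_shift_zero [simp]: "env_shift k c 0 = 0"
  and env_shift_add: "env_shift k c (G + D) = env_shift k c G + env_shift k c D"
  and env_shift_single: "env_shift k c (0(i := K)) = 0((if i < c then i else i + k) := K)"
  and env_shift_Suc_comp: "env_shift k (Suc c) G \<circ> Suc = env_shift k c (G \<circ> Suc)"
  and env_shift_Suc_0 [simp]: "env_shift k (Suc c) G 0 = G 0"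
  by (auto simp: env_eq_iff Suc_diff_le)

lemma env_drop_shift [simp]: "env_drop k (env_shift k 0 G) = G"
  by (simp add: env_eq_iff)

lemma env_drop_add: "env_drop k (G + D) = env_drop k G + env_drop k D"
  by (simp add: env_eq_iff)

lemma env_single_add: "0(i := K1 + K2) = 0(i := K1) + (0(i := K2) :: env)"
  and env_single_empty [simp]: "0(i := {#}) = (0 :: env)"
  by (simp_all add: env_eq_iff)

lemma env_le_refl [simp]: "env_le G G"
  and env_le_add_right: "env_le G (G + D)"
  and env_le_add_leftI: "env_le G D \<Longrightarrow> env_le G (E + D)"
  and env_le_add_mono: "env_le G1 G2 \<Longrightarrow> env_le D1 D2 \<Longrightarrow> env_le (G1 + D1) (G2 + D2)"
  and env_le_comp_Suc: "env_le G1 G2 \<Longrightarrow> env_le (G1 \<circ> Suc) (G2 \<circ> Suc)"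
  by (auto simp: env_le_def plus_fun_apply subset_mset.add_mono intro: subset_mset.add_increasing)

section \<open>Typing\<close>

text \<open>\<open>typed G t A n\<close>: \<open>t\<close> has type \<open>A\<close> in the environment \<open>G\<close> (a multiset of types for
  every de Bruijn index) with a derivation of size \<open>n\<close>. \<open>Star\<close> types every abstraction, as
  weak reduction never enters one. Arguments are typed by a multiset with an extra type \<open>B\<close>, so
  every argument is typed at least once: gcv erases an argument only after it has been reduced to
  an answer.\<close>

inductive typed :: "env \<Rightarrow> trm \<Rightarrow> ty \<Rightarrow> nat \<Rightarrow> bool"
  and mtyped :: "env \<Rightarrow> trm \<Rightarrow> ty multiset \<Rightarrow> nat \<Rightarrow> bool" where
  typed_Var: "typed (0(i := {#A#})) (Var i) A 1"
| typed_Star: "typed 0 (Lam t) Star 0"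
| typed_Lam: "typed G t A n \<Longrightarrow> typed (G \<circ> Suc) (Lam t) (Arr (G 0) A) (Suc n)"
| typed_App: "typed G t (Arr M A) n \<Longrightarrow> mtyped D u (add_mset B M) m \<Longrightarrow>
    typed (G + D) (App t u) A (Suc (n + m))"
| typed_Sub: "typed G t A n \<Longrightarrow> mtyped D u (add_mset B (G 0)) m \<Longrightarrow>
    typed ((G \<circ> Suc) + D) (Sub t u) A (Suc (n + m))"
| mtyped_empty: "mtyped 0 u {#} 0"
| mtyped_add: "typed G u A n \<Longrightarrow> mtyped D u M m \<Longrightarrow> mtyped (G + D) u (add_mset A M) (n + m)"

inductive_cases typed_VarE: "typed G (Var i) A n"
inductive_cases typed_LamE: "typed G (Lam t) A n"
inductive_cases typed_AppE: "typed G (App t u) A n"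
inductive_cases typed_SubE: "typed G (Sub t u) A n"
inductive_cases mtyped_emptyE: "mtyped D u {#} m"
inductive_cases mtyped_addE: "mtyped D u (add_mset A M) m"

lemma mtyped_induct [consumes 1, case_names empty add]:
  assumes "mtyped D u M m"
    and "P 0 {#} 0"
    and "\<And>G A n D M m. typed G u A n \<Longrightarrow> mtyped D u M m \<Longrightarrow> P D M m \<Longrightarrow>
      P (G + D) (add_mset A M) (n + m)"
  shows "P D M m"
proof -
  have "typed G t A n \<Longrightarrow> True" and "mtyped D u' M m \<Longrightarrow> u' = u \<Longrightarrow> P D M m"
    for G t A n D u' M m
    by (induction rule: typed_mtyped.inducts) (auto intro: assms(2,3))
  with assms(1) show ?thesis by blast
qed

lemma typed_env_eq: "typed G t A n \<Longrightarrow> G = G' \<Longrightarrow> n = n' \<Longrightarrow> typed G' t A n'"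
  and mtyped_env_eq: "mtyped D u M m \<Longrightarrow> D = D' \<Longrightarrow> m = m' \<Longrightarrow> mtyped D' u M m'"
  by simp_all

lemma mtyped_empty_iff: "mtyped D u {#} m \<longleftrightarrow> D = 0 \<and> m = 0"
  by (auto elim: mtyped_emptyE intro: mtyped_empty)

lemma mtyped_single_iff: "mtyped D u {#A#} m \<longleftrightarrow> typed D u A m"
proof
  assume "mtyped D u {#A#} m"
  then show "typed D u A m"
    by (rule mtyped_addE) (auto simp: mtyped_empty_iff)
next
  assume "typed D u A m"
  from mtyped_add[OF this mtyped_empty] show "mtyped D u {#A#} m" by simp
qed

lemma mtyped_union:
  "mtyped D1 u M1 m1 \<Longrightarrow> mtyped D2 u M2 m2 \<Longrightarrow> mtyped (D1 + D2) u (M1 + M2) (m1 + m2)"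
proof (induction rule: mtyped_induct)
  case empty
  then show ?case by simp
next
  case (add G A n D M m)
  have "mtyped (G + (D + D2)) u (add_mset A (M + M2)) (n + (m + m2))"
    using mtyped_add[OF add.hyps(1) add.IH[OF add.prems]] .
  then show ?case by (simp only: add.assoc union_mset_add_mset_left)
qed

lemma mtyped_unionE:
  assumes "mtyped D u (M1 + M2) m"
  obtains D1 D2 m1 m2 where "D = D1 + D2" "m = m1 + m2" "mtyped D1 u M1 m1" "mtyped D2 u M2 m2"
proof -
  have "mtyped D u M m \<Longrightarrow> M = M1 + M2 \<Longrightarrow>
    \<exists>D1 D2 m1 m2. D = D1 + D2 \<and> m = m1 + m2 \<and> mtyped D1 u M1 m1 \<and> mtyped D2 u M2 m2" for M
  proof (induction arbitrary: M1 M2 rule: mtyped_induct)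
    case empty
    then have "M1 = {#}" "M2 = {#}" by auto
    then show ?case using mtyped_empty add_0 by metis
  next
    case (add G A n D M m)
    have "A \<in># M1 + M2" by (simp flip: add.prems)
    then consider M1' where "M1 = add_mset A M1'" | M2' where "M2 = add_mset A M2'"
      by (metis multi_member_split union_iff)
    then show ?case
    proof cases
      case (1 M1')
      with add.prems add.IH[of M1' M2] obtain D1 D2 m1 m2
        where "D = D1 + D2" "m = m1 + m2" "mtyped D1 u M1' m1" "mtyped D2 u M2 m2" by auto
      with 1 mtyped_add[OF add.hyps(1), of D1 M1' m1] show ?thesis by (metis add.assoc)
    next
      case (2 M2')
      with add.prems add.IH[of M1 M2'] obtain D1 D2 m1 m2
        where "D = D1 + D2" "m = m1 + m2" "mtyped D1 u M1 m1" "mtyped D2 u M2' m2" by auto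
      with 2 mtyped_add[OF add.hyps(1), of D2 M2' m2] show ?thesis by (metis add.left_commute)
    qed
  qed
  with assms that show ?thesis by blast
qed

lemma mtyped_submset:
  assumes "mtyped D u M m" "M' \<subseteq># M"
  obtains D' m' where "mtyped D' u M' m'" "env_le D' D" "m' \<le> m"
proof -
  from assms have "mtyped D u (M' + (M - M')) m" by simp
  then obtain D1 D2 m1 m2 where "D = D1 + D2" "m = m1 + m2" "mtyped D1 u M' m1"
    by (rule mtyped_unionE)
  with that env_le_add_right show ?thesis by fastforce
qed

lemma typed_lift:
  shows "typed G t A n \<Longrightarrow> typed (env_shift k c G) (lift k c t) A n"
    and "mtyped D u M m \<Longrightarrow> mtyped (env_shift k c D) (lift k c u) M m"
proof (induction arbitrary: c and c rule: typed_mtyped.inducts)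
  case (typed_Var i A)
  show ?case unfolding env_shift_single lift.simps by (rule typed_mtyped.typed_Var)
next
  case (typed_Star t)
  show ?case unfolding env_shift_zero lift.simps by (rule typed_mtyped.typed_Star)
next
  case (typed_Lam G t A n)
  show ?case
    using typed_mtyped.typed_Lam[OF typed_Lam.IH[of "Suc c"]]
    unfolding env_shift_Suc_comp env_shift_Suc_0 lift.simps .
next
  case (typed_App G t M A n D u B m)
  show ?case
    using typed_mtyped.typed_App[OF typed_App.IH] unfolding env_shift_add lift.simps .
next
  case (typed_Sub G t A n D u B m)
  show ?case
    using typed_mtyped.typed_Sub[OF typed_Sub.IH(1)[of "Suc c"]] typed_Sub.IH(2)[of c]
    unfolding env_shift_add env_shift_Suc_comp env_shift_Suc_0 lift.simps by blast
next
  case (mtyped_empty u)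
  show ?case unfolding env_shift_zero by (rule typed_mtyped.mtyped_empty)
next
  case (mtyped_add G u A n D M m)
  show ?case
    using typed_mtyped.mtyped_add[OF mtyped_add.IH] unfolding env_shift_add .
qed

lemma typed_liftD:
  shows "typed G' s A n \<Longrightarrow> s = lift k c t \<Longrightarrow> \<exists>G. G' = env_shift k c G \<and> typed G t A n"
    and "mtyped D' s M m \<Longrightarrow> s = lift k c t \<Longrightarrow> \<exists>D. D' = env_shift k c D \<and> mtyped D t M m"
proof (induction arbitrary: c t and c t rule: typed_mtyped.inducts)
  case (typed_Var i A)
  then obtain j where "t = Var j" "i = (if j < c then j else j + k)" by (cases t) auto
  then have "0(i := {#A#}) = env_shift k c (0(j := {#A#}))" by (simp add: env_shift_single)
  with \<open>t = Var j\<close> typed_mtyped.typed_Var[of j A] show ?case by blast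
next
  case (typed_Star s)
  then obtain s' where "t = Lam s'" by (cases t) auto
  then show ?case using typed_mtyped.typed_Star by (metis env_shift_zero)
next
  case (typed_Lam G s A n)
  then obtain s' where t: "t = Lam s'" "s = lift k (Suc c) s'" by (cases t) auto
  with typed_Lam.IH obtain G0 where "G = env_shift k (Suc c) G0" "typed G0 s' A n" by blast
  with t show ?case
    by (metis env_shift_Suc_0 env_shift_Suc_comp typed_mtyped.typed_Lam)
next
  case (typed_App G s M A n D u B m)
  then obtain s' u' where t: "t = App s' u'" "s = lift k c s'" "u = lift k c u'" by (cases t) auto
  with typed_App.IH obtain G0 D0 where
    "G = env_shift k c G0" "typed G0 s' (Arr M A) n"
    "D = env_shift k c D0" "mtyped D0 u' (add_mset B M) m"
    by blast
  with t show ?case by (metis env_shift_add typed_mtyped.typed_App)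
next
  case (typed_Sub G s A n D u B m)
  then obtain s' u' where t: "t = Sub s' u'" "s = lift k (Suc c) s'" "u = lift k c u'"
    by (cases t) auto
  with typed_Sub.IH obtain G0 D0 where
    "G = env_shift k (Suc c) G0" "typed G0 s' A n"
    "D = env_shift k c D0" "mtyped D0 u' (add_mset B (G0 0)) m"
    by fastforce
  with t show ?case by (metis env_shift_add env_shift_Suc_comp typed_mtyped.typed_Sub)
next
  case (mtyped_empty u)
  show ?case using typed_mtyped.mtyped_empty by (metis env_shift_zero)
next
  case (mtyped_add G u A n D M m)
  then obtain G0 D0 where "G = env_shift k c G0" "typed G0 t A n"
    and "D = env_shift k c D0" "mtyped D0 t M m"
    by blast
  then show ?case by (metis env_shift_add typed_mtyped.mtyped_add)
qed

section \<open>Substitution contexts and the rules m and gcv\<close>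

text \<open>\<open>styped S G D m\<close>: plugging a term typed in \<open>G\<close> into the substitution context \<open>S\<close>
  binds the indices of \<open>G\<close> below \<open>length S\<close>; the substituted terms contribute the
  environment \<open>D\<close> and the size \<open>m\<close>.\<close>

inductive styped :: "trm list \<Rightarrow> env \<Rightarrow> env \<Rightarrow> nat \<Rightarrow> bool" where
  styped_Nil: "styped [] G 0 0"
| styped_Cons: "styped S G D m \<Longrightarrow> mtyped D' u (add_mset B (G (length S) + D 0)) m' \<Longrightarrow>
    styped (u # S) G ((D \<circ> Suc) + D') (Suc (m + m'))"

lemma typed_plugS_iff:
  "typed G (plugS S s) A n \<longleftrightarrow>
    (\<exists>Gs ns D m. typed Gs s A ns \<and> styped S Gs D m \<and> G = env_drop (length S) Gs + D \<and> n = ns + m)"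
proof (induction S arbitrary: G n)
  case Nil
  have "env_drop 0 G + 0 = G" for G :: env by (simp add: env_eq_iff)
  moreover have "styped [] G D m \<longleftrightarrow> D = 0 \<and> m = 0" for G D m
    by (auto elim: styped.cases intro: styped_Nil)
  ultimately show ?case by auto
next
  case (Cons u S)
  let ?k = "length S"
  have drop_Suc: "(env_drop ?k Gs + D) \<circ> Suc = env_drop (Suc ?k) Gs + (D \<circ> Suc)"
    and drop_0: "(env_drop ?k Gs + D) 0 = Gs ?k + D 0" for Gs D
    by (simp_all add: env_eq_iff)
  show ?case
  proof
    assume "typed G (plugS (u # S) s) A n"
    then obtain Gb nb D' B m' where G: "G = (Gb \<circ> Suc) + D'" "n = Suc (nb + m')"
      and "typed Gb (plugS S s) A nb" and u: "mtyped D' u (add_mset B (Gb 0)) m'"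
      by (auto elim: typed_SubE)
    then obtain Gs ns D m where "typed Gs s A ns" "styped S Gs D m"
      and Gb: "Gb = env_drop ?k Gs + D" "nb = ns + m"
      using Cons.IH by blast
    moreover have "styped (u # S) Gs ((D \<circ> Suc) + D') (Suc (m + m'))"
      using styped_Cons[OF \<open>styped S Gs D m\<close>] u by (simp add: Gb drop_0)
    moreover have "G = env_drop (length (u # S)) Gs + ((D \<circ> Suc) + D')"
      using G(1) by (simp add: Gb drop_Suc add.assoc)
    moreover have "n = ns + Suc (m + m')" using G(2) Gb(2) by simp
    ultimately show "\<exists>Gs ns D m. typed Gs s A ns \<and> styped (u # S) Gs D m \<and>
        G = env_drop (length (u # S)) Gs + D \<and> n = ns + m"
      by blast
  next
    assume "\<exists>Gs ns D m. typed Gs s A ns \<and> styped (u # S) Gs D m \<and>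
        G = env_drop (length (u # S)) Gs + D \<and> n = ns + m"
    then obtain Gs ns D m D' B m' where "typed Gs s A ns" "styped S Gs D m"
      and u: "mtyped D' u (add_mset B (Gs ?k + D 0)) m'"
      and G: "G = env_drop (Suc ?k) Gs + ((D \<circ> Suc) + D')" "n = ns + Suc (m + m')"
      by (auto elim: styped.cases)
    then have "typed (env_drop ?k Gs + D) (plugS S s) A (ns + m)"
      using Cons.IH by blast
    from typed_Sub[OF this] u
    have "typed (((env_drop ?k Gs + D) \<circ> Suc) + D') (plugS (u # S) s) A (Suc (ns + m + m'))"
      by (simp add: drop_0)
    then show "typed G (plugS (u # S) s) A n"
      by (rule typed_env_eq) (simp_all add: G drop_Suc add.assoc)
  qed
qed

lemma styped_cong: "styped S G D m \<Longrightarrow> (\<And>j. j < length S \<Longrightarrow> G' j = G j) \<Longrightarrow> styped S G' D m"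
proof (induction rule: styped.induct)
  case (styped_Nil G)
  show ?case by (rule styped.styped_Nil)
next
  case (styped_Cons S G D m D' u B m')
  have "styped S G' D m" using styped_Cons.IH styped_Cons.prems by simp
  moreover have "G' (length S) = G (length S)" using styped_Cons.prems by simp
  ultimately show ?case
    using styped.styped_Cons[of S G' D m D' u B m'] styped_Cons.hyps(2) by simp
qed

lemma styped_mono:
  "styped S G D m \<Longrightarrow> (\<And>j. j < length S \<Longrightarrow> G' j \<subseteq># G j) \<Longrightarrow>
    \<exists>D' m'. styped S G' D' m' \<and> env_le D' D \<and> m' \<le> m"
proof (induction rule: styped.induct)
  case (styped_Nil G)
  show ?case using styped.styped_Nil env_le_refl by blast
next
  case (styped_Cons S G D m D1 u B m1)
  have "G' j \<subseteq># G j" if "j < length S" for j using styped_Cons.prems that by simp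
  then obtain D' m' where IH: "styped S G' D' m'" "env_le D' D" "m' \<le> m"
    using styped_Cons.IH by blast
  have "add_mset B (G' (length S) + D' 0) \<subseteq># add_mset B (G (length S) + D 0)"
    using styped_Cons.prems[of "length S"] IH(2) by (simp add: env_le_def subset_mset.add_mono)
  with styped_Cons.hyps(2) obtain D1' m1' where
    "mtyped D1' u (add_mset B (G' (length S) + D' 0)) m1'" "env_le D1' D1" "m1' \<le> m1"
    by (rule mtyped_submset)
  moreover from this(1) have "styped (u # S) G' ((D' \<circ> Suc) + D1') (Suc (m' + m1'))"
    by (rule styped.styped_Cons[OF IH(1)])
  moreover have "env_le ((D' \<circ> Suc) + D1') ((D \<circ> Suc) + D1)"
    using IH(2) \<open>env_le D1' D1\<close> by (intro env_le_add_mono env_le_comp_Suc)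
  ultimately show ?case
    using IH(3) by (intro exI[of _ "(D' \<circ> Suc) + D1'"] exI[of _ "Suc (m' + m1')"]) simp
qed

lemma typed_m_reduct:
  assumes "typed G (App (plugS S (Lam t)) u) A n"
  obtains n' where "n' < n" "typed G (plugS S (Sub t (lift (length S) 0 u))) A n'"
proof -
  let ?k = "length S"
  from assms obtain G1 M n1 D B m where G: "G = G1 + D" "n = Suc (n1 + m)"
    and "typed G1 (plugS S (Lam t)) (Arr M A) n1" and u: "mtyped D u (add_mset B M) m"
    by (auto elim: typed_AppE)
  then obtain Gs ns Ds ms where "typed Gs (Lam t) (Arr M A) ns" and S: "styped S Gs Ds ms"
    and G1: "G1 = env_drop ?k Gs + Ds" "n1 = ns + ms"
    unfolding typed_plugS_iff by blast
  then obtain Gt nt where Gs: "Gs = Gt \<circ> Suc" "M = Gt 0" "ns = Suc nt" and t: "typed Gt t A nt"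
    by (auto elim: typed_LamE)
  have "mtyped (env_shift ?k 0 D) (lift ?k 0 u) (add_mset B (Gt 0)) m"
    using typed_lift(2)[OF u] Gs(2) by simp
  with t have "typed ((Gt \<circ> Suc) + env_shift ?k 0 D) (Sub t (lift ?k 0 u)) A (Suc (nt + m))"
    by (rule typed_Sub)
  moreover have "styped S ((Gt \<circ> Suc) + env_shift ?k 0 D) Ds ms"
    using S by (rule styped_cong) (simp add: Gs env_eq_iff)
  ultimately have "typed (env_drop ?k ((Gt \<circ> Suc) + env_shift ?k 0 D) + Ds)
      (plugS S (Sub t (lift ?k 0 u))) A (Suc (nt + m) + ms)"
    unfolding typed_plugS_iff by blast
  then have "typed G (plugS S (Sub t (lift ?k 0 u))) A (Suc (nt + m) + ms)"
    by (rule typed_env_eq) (simp_all add: G G1 Gs env_drop_add add_ac)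
  moreover have "Suc (nt + m) + ms < n" using G G1 Gs by simp
  ultimately show ?thesis using that by blast
qed

lemma typed_m_expand:
  assumes "typed G (plugS S (Sub t (lift (length S) 0 u))) A n"
  obtains n' where "typed G (App (plugS S (Lam t)) u) A n'"
proof -
  let ?k = "length S"
  from assms obtain Gs ns Ds ms where "typed Gs (Sub t (lift ?k 0 u)) A ns"
    and S: "styped S Gs Ds ms" and G: "G = env_drop ?k Gs + Ds"
    unfolding typed_plugS_iff by blast
  then obtain Gt nt D' B m where Gs: "Gs = (Gt \<circ> Suc) + D'" and t: "typed Gt t A nt"
    and "mtyped D' (lift ?k 0 u) (add_mset B (Gt 0)) m"
    by (auto elim: typed_SubE)
  then obtain Du where D': "D' = env_shift ?k 0 Du" and u: "mtyped Du u (add_mset B (Gt 0)) m"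
    using typed_liftD(2) by blast
  have "styped S (Gt \<circ> Suc) Ds ms"
    using S by (rule styped_cong) (simp add: Gs D' env_eq_iff)
  with typed_Lam[OF t]
  have "typed (env_drop ?k (Gt \<circ> Suc) + Ds) (plugS S (Lam t)) (Arr (Gt 0) A) (Suc nt + ms)"
    unfolding typed_plugS_iff by blast
  from typed_App[OF this u] have "typed G (App (plugS S (Lam t)) u) A (Suc (Suc nt + ms + m))"
    by (rule typed_env_eq) (simp_all add: G Gs D' env_drop_add add_ac)
  then show ?thesis by (rule that)
qed

lemma typed_gcv_reduct:
  assumes "typed G (Sub (lift 1 0 t) (plugS S (Lam s))) A n"
  obtains G' n' where "n' < n" "env_le G' G" "typed G' (plugS S (lift (length S) 0 t)) A n'"
proof -
  let ?k = "length S"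
  from assms obtain Gb nb D B m where G: "G = (Gb \<circ> Suc) + D" "n = Suc (nb + m)"
    and "typed Gb (lift 1 0 t) A nb" and arg: "mtyped D (plugS S (Lam s)) (add_mset B (Gb 0)) m"
    by (auto elim: typed_SubE)
  then obtain Gt where Gb: "Gb = env_shift 1 0 Gt" and t: "typed Gt t A nb"
    using typed_liftD(1) by blast
  from arg have "typed D (plugS S (Lam s)) B m"
    by (simp add: Gb env_shift_apply mtyped_single_iff)
  then obtain Gs ns Ds ms where S: "styped S Gs Ds ms"
    and D: "D = env_drop ?k Gs + Ds" "m = ns + ms"
    unfolding typed_plugS_iff by blast
  obtain Ds' ms' where "styped S (env_shift ?k 0 Gt) Ds' ms'" "env_le Ds' Ds" "ms' \<le> ms"
    using styped_mono[OF S, of "env_shift ?k 0 Gt"] by (auto simp: env_shift_apply)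
  with typed_lift(1)[OF t, of ?k 0] have "typed (Gt + Ds') (plugS S (lift ?k 0 t)) A (nb + ms')"
    unfolding typed_plugS_iff by fastforce
  moreover have "env_le (Gt + Ds') G"
  proof -
    have "env_le (Gt + Ds') (Gt + (env_drop ?k Gs + Ds))"
      using \<open>env_le Ds' Ds\<close> by (intro env_le_add_mono env_le_refl env_le_add_leftI)
    moreover have "Gb \<circ> Suc = Gt" by (simp add: Gb env_eq_iff)
    ultimately show ?thesis by (simp add: G D)
  qed
  moreover have "nb + ms' < n" using G D \<open>ms' \<le> ms\<close> by simp
  ultimately show ?thesis using that by blast
qed

lemma typed_gcv_expand:
  assumes "typed G (plugS S (lift (length S) 0 t)) A n"
  obtains n' where "typed G (Sub (lift 1 0 t) (plugS S (Lam s))) A n'"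
proof -
  let ?k = "length S"
  from assms obtain Gs ns Ds ms where "typed Gs (lift ?k 0 t) A ns"
    and S: "styped S Gs Ds ms" and G: "G = env_drop ?k Gs + Ds"
    unfolding typed_plugS_iff by blast
  then obtain Gt where Gs: "Gs = env_shift ?k 0 Gt" and t: "typed Gt t A ns"
    using typed_liftD(1) by blast
  have "styped S 0 Ds ms"
    using S by (rule styped_cong) (simp add: Gs env_eq_iff)
  with typed_Star[of s] have "typed (env_drop ?k 0 + Ds) (plugS S (Lam s)) Star (0 + ms)"
    unfolding typed_plugS_iff by blast
  then have "typed Ds (plugS S (Lam s)) Star ms"
    by (rule typed_env_eq) (simp_all add: env_eq_iff)
  moreover have "env_shift 1 0 Gt 0 = {#}" by (simp add: env_shift_apply)
  ultimately have "mtyped Ds (plugS S (Lam s)) (add_mset Star (env_shift 1 0 Gt 0)) ms"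
    by (simp only: mtyped_single_iff)
  from typed_Sub[OF typed_lift(1)[OF t] this]
  have "typed G (Sub (lift 1 0 t) (plugS S (Lam s))) A (Suc (ns + ms))"
    by (rule typed_env_eq) (simp_all add: G Gs env_eq_iff)
  then show ?thesis by (rule that)
qed

section \<open>Linear substitution and the rule e\<close>

text \<open>Typing of the replacement of one weak occurrence of the index \<open>i\<close> in \<open>s\<close> by \<open>u\<close>
  (shifted past \<open>i + 1\<close> binders), which yields \<open>s'\<close>.\<close>

definition lsubst_forward :: "nat \<Rightarrow> trm \<Rightarrow> trm \<Rightarrow> trm \<Rightarrow> bool" where
  "lsubst_forward i u s s' \<longleftrightarrow> (\<forall>G A n. typed G s A n \<longrightarrow>
    (\<exists>K G0. K \<noteq> {#} \<and> G = G0 + 0(i := K) \<and>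
      (\<forall>D m. mtyped D u K m \<longrightarrow>
        (\<exists>n'. n' + size K = n + m \<and> typed (G0 + env_shift (Suc i) 0 D) s' A n'))))"

lemma lsubst_forward_Var: "lsubst_forward i u (Var i) (lift (Suc i) 0 u)"
  unfolding lsubst_forward_def
proof (intro allI impI)
  fix G A n
  assume "typed G (Var i) A n"
  then have G: "G = 0 + 0(i := {#A#})" "n = 1" by (auto elim: typed_VarE)
  have "typed (0 + env_shift (Suc i) 0 D) (lift (Suc i) 0 u) A m" if "mtyped D u {#A#} m" for D m
    using typed_lift(1)[of D u A m] that by (simp add: mtyped_single_iff)
  with G show "\<exists>K G0. K \<noteq> {#} \<and> G = G0 + 0(i := K) \<and> (\<forall>D m. mtyped D u K m \<longrightarrow>
      (\<exists>n'. n' + size K = n + m \<and> typed (G0 + env_shift (Suc i) 0 D) (lift (Suc i) 0 u) A n'))"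
    by (intro exI[of _ "{#A#}"] exI[of _ 0]) auto
qed

lemma mtyped_lsubst_forward:
  assumes fw: "lsubst_forward i u s s'"
  shows "mtyped D s M m \<Longrightarrow> \<exists>K G0. (M \<noteq> {#} \<longrightarrow> K \<noteq> {#}) \<and> D = G0 + 0(i := K) \<and>
    (\<forall>Du mu. mtyped Du u K mu \<longrightarrow>
      (\<exists>m'. m' + size K = m + mu \<and> mtyped (G0 + env_shift (Suc i) 0 Du) s' M m'))"
proof (induction rule: mtyped_induct)
  case empty
  have "mtyped (0 + env_shift (Suc i) 0 Du) s' {#} 0" if "mtyped Du u {#} mu" for Du mu
    using that mtyped_empty by (simp add: mtyped_empty_iff)
  then show ?case by (intro exI[of _ "{#}"] exI[of _ 0]) (simp add: mtyped_empty_iff)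
next
  case (add G A n D M m)
  from fw add.hyps(1) obtain K1 G1 where K1: "K1 \<noteq> {#}" "G = G1 + 0(i := K1)"
    and s1: "\<And>Du mu. mtyped Du u K1 mu \<Longrightarrow>
      \<exists>n'. n' + size K1 = n + mu \<and> typed (G1 + env_shift (Suc i) 0 Du) s' A n'"
    unfolding lsubst_forward_def by blast
  from add.IH obtain K2 G2 where K2: "D = G2 + 0(i := K2)"
    and s2: "\<And>Du mu. mtyped Du u K2 mu \<Longrightarrow>
      \<exists>m'. m' + size K2 = m + mu \<and> mtyped (G2 + env_shift (Suc i) 0 Du) s' M m'"
    by blast
  have "\<exists>m'. m' + size (K1 + K2) = n + m + mu \<and>
      mtyped ((G1 + G2) + env_shift (Suc i) 0 Du) s' (add_mset A M) m'"
    if "mtyped Du u (K1 + K2) mu" for Du mu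
  proof -
    from that obtain Du1 Du2 mu1 mu2 where Du: "Du = Du1 + Du2" "mu = mu1 + mu2"
      and "mtyped Du1 u K1 mu1" "mtyped Du2 u K2 mu2"
      by (rule mtyped_unionE)
    with s1 s2 obtain n' m' where "n' + size K1 = n + mu1" "m' + size K2 = m + mu2"
      and "typed (G1 + env_shift (Suc i) 0 Du1) s' A n'"
      and "mtyped (G2 + env_shift (Suc i) 0 Du2) s' M m'"
      by meson
    moreover from mtyped_add[OF this(3,4)]
    have "mtyped ((G1 + G2) + env_shift (Suc i) 0 Du) s' (add_mset A M) (n' + m')"
      by (rule mtyped_env_eq) (simp_all add: Du env_shift_add add_ac)
    ultimately show ?thesis by (intro exI[of _ "n' + m'"]) (simp add: Du)
  qed
  moreover have "G + D = (G1 + G2) + 0(i := K1 + K2)"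
    by (simp add: K1 K2 env_single_add add_ac)
  ultimately show ?case using K1(1) by blast
qed

lemma lsubst_forward_AppL:
  assumes "lsubst_forward i u s s'"
  shows "lsubst_forward i u (App s v) (App s' v)"
  unfolding lsubst_forward_def
proof (intro allI impI)
  fix G A n
  assume "typed G (App s v) A n"
  then obtain G1 M n1 D1 B m1 where G: "G = G1 + D1" "n = Suc (n1 + m1)"
    and "typed G1 s (Arr M A) n1" and v: "mtyped D1 v (add_mset B M) m1"
    by (auto elim: typed_AppE)
  with assms obtain K G0 where "K \<noteq> {#}" "G1 = G0 + 0(i := K)"
    and s: "\<And>D m. mtyped D u K m \<Longrightarrow>
      \<exists>n'. n' + size K = n1 + m \<and> typed (G0 + env_shift (Suc i) 0 D) s' (Arr M A) n'"
    unfolding lsubst_forward_def by blast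
  moreover have
    "\<exists>n'. n' + size K = n + m \<and> typed ((G0 + D1) + env_shift (Suc i) 0 D) (App s' v) A n'"
    if "mtyped D u K m" for D m
  proof -
    from s[OF that] obtain n' where "n' + size K = n1 + m"
      and "typed (G0 + env_shift (Suc i) 0 D) s' (Arr M A) n'" by blast
    with typed_App[OF this(2) v] show ?thesis
      by (intro exI[of _ "Suc (n' + m1)"] conjI, simp add: G)
        (erule typed_env_eq, simp_all add: add_ac)
  qed
  ultimately show "\<exists>K G0. K \<noteq> {#} \<and> G = G0 + 0(i := K) \<and> (\<forall>D m. mtyped D u K m \<longrightarrow>
      (\<exists>n'. n' + size K = n + m \<and> typed (G0 + env_shift (Suc i) 0 D) (App s' v) A n'))"
    using G by (intro exI[of _ K] exI[of _ "G0 + D1"]) (simp add: add_ac)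
qed

lemma lsubst_forward_AppR:
  assumes "lsubst_forward i u s s'"
  shows "lsubst_forward i u (App v s) (App v s')"
  unfolding lsubst_forward_def
proof (intro allI impI)
  fix G A n
  assume "typed G (App v s) A n"
  then obtain G1 M n1 D1 B m1 where G: "G = G1 + D1" "n = Suc (n1 + m1)"
    and v: "typed G1 v (Arr M A) n1" and "mtyped D1 s (add_mset B M) m1"
    by (auto elim: typed_AppE)
  from mtyped_lsubst_forward[OF assms this(4)] obtain K G0
    where "add_mset B M \<noteq> {#} \<longrightarrow> K \<noteq> {#}" "D1 = G0 + 0(i := K)"
    and s: "\<And>D m. mtyped D u K m \<Longrightarrow>
      \<exists>m'. m' + size K = m1 + m \<and> mtyped (G0 + env_shift (Suc i) 0 D) s' (add_mset B M) m'"
    by blast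
  moreover have
    "\<exists>n'. n' + size K = n + m \<and> typed ((G1 + G0) + env_shift (Suc i) 0 D) (App v s') A n'"
    if "mtyped D u K m" for D m
  proof -
    from s[OF that] obtain m' where "m' + size K = m1 + m"
      and "mtyped (G0 + env_shift (Suc i) 0 D) s' (add_mset B M) m'" by blast
    with typed_App[OF v this(2)] show ?thesis
      by (intro exI[of _ "Suc (n1 + m')"] conjI, simp add: G)
        (erule typed_env_eq, simp_all add: add_ac)
  qed
  ultimately show "\<exists>K G0. K \<noteq> {#} \<and> G = G0 + 0(i := K) \<and> (\<forall>D m. mtyped D u K m \<longrightarrow>
      (\<exists>n'. n' + size K = n + m \<and> typed (G0 + env_shift (Suc i) 0 D) (App v s') A n'))"
    using G by (intro exI[of _ K] exI[of _ "G1 + G0"]) (simp add: add.assoc)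
qed

lemma lsubst_forward_SubArg:
  assumes "lsubst_forward i u s s'"
  shows "lsubst_forward i u (Sub v s) (Sub v s')"
  unfolding lsubst_forward_def
proof (intro allI impI)
  fix G A n
  assume "typed G (Sub v s) A n"
  then obtain Gb nb D1 B m1 where G: "G = (Gb \<circ> Suc) + D1" "n = Suc (nb + m1)"
    and v: "typed Gb v A nb" and "mtyped D1 s (add_mset B (Gb 0)) m1"
    by (auto elim: typed_SubE)
  from mtyped_lsubst_forward[OF assms this(4)] obtain K G0
    where "add_mset B (Gb 0) \<noteq> {#} \<longrightarrow> K \<noteq> {#}" "D1 = G0 + 0(i := K)"
    and s: "\<And>D m. mtyped D u K m \<Longrightarrow>
      \<exists>m'. m' + size K = m1 + m \<and> mtyped (G0 + env_shift (Suc i) 0 D) s' (add_mset B (Gb 0)) m'"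
    by blast
  moreover have "\<exists>n'. n' + size K = n + m \<and>
      typed (((Gb \<circ> Suc) + G0) + env_shift (Suc i) 0 D) (Sub v s') A n'"
    if "mtyped D u K m" for D m
  proof -
    from s[OF that] obtain m' where "m' + size K = m1 + m"
      and "mtyped (G0 + env_shift (Suc i) 0 D) s' (add_mset B (Gb 0)) m'" by blast
    with typed_Sub[OF v this(2)] show ?thesis
      by (intro exI[of _ "Suc (nb + m')"] conjI, simp add: G)
        (erule typed_env_eq, simp_all add: add_ac)
  qed
  ultimately show "\<exists>K G0. K \<noteq> {#} \<and> G = G0 + 0(i := K) \<and> (\<forall>D m. mtyped D u K m \<longrightarrow>
      (\<exists>n'. n' + size K = n + m \<and> typed (G0 + env_shift (Suc i) 0 D) (Sub v s') A n'))"
    using G by (intro exI[of _ K] exI[of _ "(Gb \<circ> Suc) + G0"]) (simp add: add.assoc)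
qed

lemma lsubst_forward_SubBody:
  assumes "lsubst_forward (Suc i) u s s'"
  shows "lsubst_forward i u (Sub s v) (Sub s' v)"
  unfolding lsubst_forward_def
proof (intro allI impI)
  fix G A n
  assume "typed G (Sub s v) A n"
  then obtain Gb nb D1 B m1 where G: "G = (Gb \<circ> Suc) + D1" "n = Suc (nb + m1)"
    and "typed Gb s A nb" and v: "mtyped D1 v (add_mset B (Gb 0)) m1"
    by (auto elim: typed_SubE)
  with assms obtain K G0 where "K \<noteq> {#}" and Gb: "Gb = G0 + 0(Suc i := K)"
    and s: "\<And>D m. mtyped D u K m \<Longrightarrow>
      \<exists>n'. n' + size K = nb + m \<and> typed (G0 + env_shift (Suc (Suc i)) 0 D) s' A n'"
    unfolding lsubst_forward_def by blast
  moreover have "\<exists>n'. n' + size K = n + m \<and>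
      typed (((G0 \<circ> Suc) + D1) + env_shift (Suc i) 0 D) (Sub s' v) A n'"
    if "mtyped D u K m" for D m
  proof -
    from s[OF that] obtain n' where "n' + size K = nb + m"
      and s': "typed (G0 + env_shift (Suc (Suc i)) 0 D) s' A n'" by blast
    moreover have "(G0 + env_shift (Suc (Suc i)) 0 D) 0 = Gb 0"
      by (simp add: Gb env_eq_iff)
    with v have "mtyped D1 v (add_mset B ((G0 + env_shift (Suc (Suc i)) 0 D) 0)) m1"
      by (simp only:)
    from typed_Sub[OF s' this]
    have "typed (((G0 \<circ> Suc) + D1) + env_shift (Suc i) 0 D) (Sub s' v) A (Suc (n' + m1))"
      by (rule typed_env_eq) (simp_all add: env_eq_iff add_ac)
    ultimately show ?thesis by (intro exI[of _ "Suc (n' + m1)"]) (simp add: G)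
  qed
  moreover have "G = ((G0 \<circ> Suc) + D1) + 0(i := K)"
    by (simp add: G Gb env_eq_iff add_ac)
  ultimately show "\<exists>K G0. K \<noteq> {#} \<and> G = G0 + 0(i := K) \<and> (\<forall>D m. mtyped D u K m \<longrightarrow>
      (\<exists>n'. n' + size K = n + m \<and> typed (G0 + env_shift (Suc i) 0 D) (Sub s' v) A n'))"
    by blast
qed

definition lsubst_backward :: "nat \<Rightarrow> trm \<Rightarrow> trm \<Rightarrow> trm \<Rightarrow> bool" where
  "lsubst_backward i u s s' \<longleftrightarrow> (\<forall>G A n. typed G s' A n \<longrightarrow>
    (\<exists>K G0 D m n'.
      G = G0 + env_shift (Suc i) 0 D \<and> mtyped D u K m \<and> typed (G0 + 0(i := K)) s A n'))"

lemma lsubst_backward_Var: "lsubst_backward i u (Var i) (lift (Suc i) 0 u)"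
  unfolding lsubst_backward_def
proof (intro allI impI)
  fix G A n
  assume "typed G (lift (Suc i) 0 u) A n"
  then obtain D where "G = 0 + env_shift (Suc i) 0 D" "mtyped D u {#A#} n"
    using typed_liftD(1)[of G _ A n "Suc i" 0 u] by (auto simp: mtyped_single_iff)
  moreover have "typed (0 + 0(i := {#A#})) (Var i) A 1"
    using typed_Var[of i A] by simp
  ultimately show "\<exists>K G0 D m n'. G = G0 + env_shift (Suc i) 0 D \<and> mtyped D u K m \<and>
      typed (G0 + 0(i := K)) (Var i) A n'"
    by blast
qed

lemma mtyped_lsubst_backward:
  assumes bw: "lsubst_backward i u s s'"
  shows "mtyped Dd s' M mm \<Longrightarrow> \<exists>K G0 D m m'.
    Dd = G0 + env_shift (Suc i) 0 D \<and> mtyped D u K m \<and> mtyped (G0 + 0(i := K)) s M m'"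
proof (induction rule: mtyped_induct)
  case empty
  have "(0 :: env) = 0 + env_shift (Suc i) 0 0" "mtyped (0 + 0(i := {#})) s {#} 0"
    by (simp_all add: mtyped_empty)
  with mtyped_empty show ?case by blast
next
  case (add G A n D M m)
  from bw add.hyps(1) obtain K1 G1 D1 m1 n1 where G: "G = G1 + env_shift (Suc i) 0 D1"
    and u1: "mtyped D1 u K1 m1" and s1: "typed (G1 + 0(i := K1)) s A n1"
    unfolding lsubst_backward_def by blast
  from add.IH obtain K2 G2 D2 m2 m2' where D: "D = G2 + env_shift (Suc i) 0 D2"
    and u2: "mtyped D2 u K2 m2" and s2: "mtyped (G2 + 0(i := K2)) s M m2'"
    by blast
  have "G + D = (G1 + G2) + env_shift (Suc i) 0 (D1 + D2)"
    by (simp add: G D env_shift_add add_ac)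
  moreover have "mtyped (D1 + D2) u (K1 + K2) (m1 + m2)"
    using u1 u2 by (rule mtyped_union)
  moreover from mtyped_add[OF s1 s2]
  have "mtyped ((G1 + G2) + 0(i := K1 + K2)) s (add_mset A M) (n1 + m2')"
    by (rule mtyped_env_eq) (simp_all add: env_single_add add_ac)
  ultimately show ?case by blast
qed

lemma lsubst_backward_AppL:
  assumes "lsubst_backward i u s s'"
  shows "lsubst_backward i u (App s v) (App s' v)"
  unfolding lsubst_backward_def
proof (intro allI impI)
  fix G A n
  assume "typed G (App s' v) A n"
  then obtain G1 M n1 D1 B m1 where G: "G = G1 + D1"
    and "typed G1 s' (Arr M A) n1" and v: "mtyped D1 v (add_mset B M) m1"
    by (auto elim: typed_AppE)
  with assms obtain K G0 D m n' where "G1 = G0 + env_shift (Suc i) 0 D" "mtyped D u K m"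
    and s: "typed (G0 + 0(i := K)) s (Arr M A) n'"
    unfolding lsubst_backward_def by blast
  moreover from typed_App[OF s v] have "typed ((G0 + D1) + 0(i := K)) (App s v) A (Suc (n' + m1))"
    by (rule typed_env_eq) (simp_all add: add_ac)
  ultimately show "\<exists>K G0 D m n'. G = G0 + env_shift (Suc i) 0 D \<and> mtyped D u K m \<and>
      typed (G0 + 0(i := K)) (App s v) A n'"
    using G by (metis add.assoc add.commute)
qed

lemma lsubst_backward_AppR:
  assumes "lsubst_backward i u s s'"
  shows "lsubst_backward i u (App v s) (App v s')"
  unfolding lsubst_backward_def
proof (intro allI impI)
  fix G A n
  assume "typed G (App v s') A n"
  then obtain G1 M n1 D1 B m1 where G: "G = G1 + D1"
    and v: "typed G1 v (Arr M A) n1" and "mtyped D1 s' (add_mset B M) m1"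
    by (auto elim: typed_AppE)
  from mtyped_lsubst_backward[OF assms this(3)] obtain K G0 D m m' where
    "D1 = G0 + env_shift (Suc i) 0 D" "mtyped D u K m"
    and s: "mtyped (G0 + 0(i := K)) s (add_mset B M) m'"
    by blast
  moreover from typed_App[OF v s] have "typed ((G1 + G0) + 0(i := K)) (App v s) A (Suc (n1 + m'))"
    by (rule typed_env_eq) (simp_all add: add_ac)
  ultimately show "\<exists>K G0 D m n'. G = G0 + env_shift (Suc i) 0 D \<and> mtyped D u K m \<and>
      typed (G0 + 0(i := K)) (App v s) A n'"
    using G by (metis add.assoc)
qed

lemma lsubst_backward_SubArg:
  assumes "lsubst_backward i u s s'"
  shows "lsubst_backward i u (Sub v s) (Sub v s')"
  unfolding lsubst_backward_def
proof (intro allI impI)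
  fix G A n
  assume "typed G (Sub v s') A n"
  then obtain Gb nb D1 B m1 where G: "G = (Gb \<circ> Suc) + D1"
    and v: "typed Gb v A nb" and "mtyped D1 s' (add_mset B (Gb 0)) m1"
    by (auto elim: typed_SubE)
  from mtyped_lsubst_backward[OF assms this(3)] obtain K G0 D m m' where
    "D1 = G0 + env_shift (Suc i) 0 D" "mtyped D u K m"
    and s: "mtyped (G0 + 0(i := K)) s (add_mset B (Gb 0)) m'"
    by blast
  moreover from typed_Sub[OF v s]
  have "typed (((Gb \<circ> Suc) + G0) + 0(i := K)) (Sub v s) A (Suc (nb + m'))"
    by (rule typed_env_eq) (simp_all add: add_ac)
  ultimately show "\<exists>K G0 D m n'. G = G0 + env_shift (Suc i) 0 D \<and> mtyped D u K m \<and>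
      typed (G0 + 0(i := K)) (Sub v s) A n'"
    using G by (metis add.assoc)
qed

lemma lsubst_backward_SubBody:
  assumes "lsubst_backward (Suc i) u s s'"
  shows "lsubst_backward i u (Sub s v) (Sub s' v)"
  unfolding lsubst_backward_def
proof (intro allI impI)
  fix G A n
  assume "typed G (Sub s' v) A n"
  then obtain Gb nb D1 B m1 where G: "G = (Gb \<circ> Suc) + D1"
    and "typed Gb s' A nb" and v: "mtyped D1 v (add_mset B (Gb 0)) m1"
    by (auto elim: typed_SubE)
  with assms obtain K G0 D m n' where Gb: "Gb = G0 + env_shift (Suc (Suc i)) 0 D"
    and "mtyped D u K m" and s: "typed (G0 + 0(Suc i := K)) s A n'"
    unfolding lsubst_backward_def by blast
  moreover have "(G0 + 0(Suc i := K)) 0 = Gb 0" by (simp add: Gb env_eq_iff)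
  with v have "mtyped D1 v (add_mset B ((G0 + 0(Suc i := K)) 0)) m1" by (simp only:)
  from typed_Sub[OF s this]
  have "typed (((G0 \<circ> Suc) + D1) + 0(i := K)) (Sub s v) A (Suc (n' + m1))"
    by (rule typed_env_eq) (simp_all add: env_eq_iff add_ac)
  moreover have "G = ((G0 \<circ> Suc) + D1) + env_shift (Suc i) 0 D"
    by (simp add: G Gb env_eq_iff add_ac)
  ultimately show "\<exists>K G0 D m n'. G = G0 + env_shift (Suc i) 0 D \<and> mtyped D u K m \<and>
      typed (G0 + 0(i := K)) (Sub s v) A n'"
    by blast
qed

lemma lsubst_forward_plugW:
  "lsubst_forward i u (plugW W (Var (depthW W + i))) (plugW W (lift (depthW W + Suc i) 0 u))"
proof (induction W arbitrary: i)
  case (SubBody W v)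
  then show ?case using lsubst_forward_SubBody[OF SubBody[of "Suc i"]] by simp
qed (simp_all add: lsubst_forward_Var lsubst_forward_AppL lsubst_forward_AppR
  lsubst_forward_SubArg)

lemma lsubst_backward_plugW:
  "lsubst_backward i u (plugW W (Var (depthW W + i))) (plugW W (lift (depthW W + Suc i) 0 u))"
proof (induction W arbitrary: i)
  case (SubBody W v)
  then show ?case using lsubst_backward_SubBody[OF SubBody[of "Suc i"]] by simp
qed (simp_all add: lsubst_backward_Var lsubst_backward_AppL lsubst_backward_AppR
  lsubst_backward_SubArg)

lemma typed_e_reduct:
  assumes "typed G (Sub (plugW W (Var (depthW W))) u) A n"
  obtains n' where "n' < n" "typed G (Sub (plugW W (lift (Suc (depthW W)) 0 u)) u) A n'"
proof -
  let ?s' = "plugW W (lift (Suc (depthW W)) 0 u)"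
  from assms obtain Gb nb D B m where G: "G = (Gb \<circ> Suc) + D" "n = Suc (nb + m)"
    and s: "typed Gb (plugW W (Var (depthW W))) A nb" and u: "mtyped D u (add_mset B (Gb 0)) m"
    by (auto elim: typed_SubE)
  have "lsubst_forward 0 u (plugW W (Var (depthW W))) ?s'"
    using lsubst_forward_plugW[of 0 u W] by simp
  from this[unfolded lsubst_forward_def, rule_format, OF s]
  obtain K G0 where "K \<noteq> {#}" and Gb: "Gb = G0 + 0(0 := K)"
    and s': "\<And>D m. mtyped D u K m \<Longrightarrow>
      \<exists>n'. n' + size K = nb + m \<and> typed (G0 + env_shift (Suc 0) 0 D) ?s' A n'"
    by blast
  from u have "mtyped D u (K + add_mset B (G0 0)) m" by (simp add: Gb env_eq_iff add_ac)
  then obtain D1 D2 m1 m2 where D: "D = D1 + D2" "m = m1 + m2"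
    and "mtyped D1 u K m1" and u2: "mtyped D2 u (add_mset B (G0 0)) m2"
    by (rule mtyped_unionE)
  with s' obtain n' where n': "n' + size K = nb + m1"
    and s'_typed: "typed (G0 + env_shift (Suc 0) 0 D1) ?s' A n'"
    by blast
  have "(G0 + env_shift (Suc 0) 0 D1) 0 = G0 0" by (simp add: env_eq_iff)
  with u2 have "mtyped D2 u (add_mset B ((G0 + env_shift (Suc 0) 0 D1) 0)) m2" by (simp only:)
  from typed_Sub[OF s'_typed this] have "typed G (Sub ?s' u) A (Suc (n' + m2))"
    by (rule typed_env_eq) (simp_all add: G Gb D env_eq_iff add_ac)
  moreover have "Suc (n' + m2) < n" using n' G(2) D(2) \<open>K \<noteq> {#}\<close> by (simp add: nonempty_has_size)
  ultimately show ?thesis using that by blast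
qed

lemma typed_e_expand:
  assumes "typed G (Sub (plugW W (lift (Suc (depthW W)) 0 u)) u) A n"
  obtains n' where "typed G (Sub (plugW W (Var (depthW W))) u) A n'"
proof -
  let ?s = "plugW W (Var (depthW W))"
  from assms obtain Gb nb D2 B m2 where G: "G = (Gb \<circ> Suc) + D2"
    and s': "typed Gb (plugW W (lift (Suc (depthW W)) 0 u)) A nb"
    and u: "mtyped D2 u (add_mset B (Gb 0)) m2"
    by (auto elim: typed_SubE)
  have "lsubst_backward 0 u ?s (plugW W (lift (Suc (depthW W)) 0 u))"
    using lsubst_backward_plugW[of 0 u W] by simp
  from this[unfolded lsubst_backward_def, rule_format, OF s']
  obtain K G0 D1 m1 n' where Gb: "Gb = G0 + env_shift (Suc 0) 0 D1"
    and "mtyped D1 u K m1" and s: "typed (G0 + 0(0 := K)) ?s A n'"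
    by blast
  have "K + add_mset B (Gb 0) = add_mset B ((G0 + 0(0 := K)) 0)"
    by (simp add: Gb env_eq_iff add_ac)
  with mtyped_union[OF \<open>mtyped D1 u K m1\<close> u]
  have "mtyped (D1 + D2) u (add_mset B ((G0 + 0(0 := K)) 0)) (m1 + m2)" by (simp only:)
  from typed_Sub[OF s this] have "typed G (Sub ?s u) A (Suc (n' + (m1 + m2)))"
    by (rule typed_env_eq) (simp_all add: G Gb env_eq_iff add_ac)
  then show ?thesis by (rule that)
qed

section \<open>Subject reduction and subject expansion\<close>

lemma root_step_typed_shrinks:
  assumes "root_step t t'" "typed G t A n"
  shows "\<exists>G' n'. n' < n \<and> env_le G' G \<and> typed G' t' A n'"
  using assms(1)
proof cases
  case (rule_m S s u)
  with assms(2) show ?thesis by (metis env_le_refl typed_m_reduct)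
next
  case (rule_e W u)
  with assms(2) show ?thesis by (metis env_le_refl typed_e_reduct)
next
  case (rule_gcv s S v)
  with assms(2) show ?thesis by (metis typed_gcv_reduct)
qed

lemma root_step_typed_expands:
  assumes "root_step t t'" "typed G t' A n"
  shows "\<exists>n'. typed G t A n'"
  using assms(1)
proof cases
  case (rule_m S s u)
  with assms(2) show ?thesis by (metis typed_m_expand)
next
  case (rule_e W u)
  with assms(2) show ?thesis by (metis typed_e_expand)
next
  case (rule_gcv s S v)
  with assms(2) show ?thesis by (metis typed_gcv_expand)
qed

lemma mtyped_shrinks:
  assumes "\<And>G A n. typed G t A n \<Longrightarrow> \<exists>G' n'. n' < n \<and> env_le G' G \<and> typed G' t' A n'"
  shows "mtyped D t M m \<Longrightarrow> \<exists>D' m'. m' \<le> m \<and> (M \<noteq> {#} \<longrightarrow> m' < m) \<and> env_le D' D \<and> mtyped D' t' M m'"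
proof (induction rule: mtyped_induct)
  case empty
  show ?case using mtyped_empty env_le_refl by blast
next
  case (add G A n D M m)
  from assms[OF add.hyps(1)] obtain G' n' where "n' < n" "env_le G' G" "typed G' t' A n'"
    by blast
  moreover from add.IH obtain D' m' where "m' \<le> m" "env_le D' D" "mtyped D' t' M m'"
    by blast
  ultimately have "n' + m' < n + m" "env_le (G' + D') (G + D)"
    and "mtyped (G' + D') t' (add_mset A M) (n' + m')"
    by (simp_all add: env_le_add_mono mtyped_add)
  then show ?case by (meson less_imp_le)
qed

lemma typed_Sub_body_shrinks:
  assumes "typed G (Sub s v) A n"
    and "\<And>G A n. typed G s A n \<Longrightarrow> \<exists>G' n'. n' < n \<and> env_le G' G \<and> typed G' s' A n'"
  shows "\<exists>G' n'. n' < n \<and> env_le G' G \<and> typed G' (Sub s' v) A n'"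
proof -
  from assms(1) obtain Gb nb D B m where G: "G = (Gb \<circ> Suc) + D" "n = Suc (nb + m)"
    and "typed Gb s A nb" and v: "mtyped D v (add_mset B (Gb 0)) m"
    by (auto elim: typed_SubE)
  with assms(2) obtain Gb' nb' where "nb' < nb" "env_le Gb' Gb" and s': "typed Gb' s' A nb'"
    by blast
  moreover from \<open>env_le Gb' Gb\<close> have "add_mset B (Gb' 0) \<subseteq># add_mset B (Gb 0)"
    by (simp add: env_le_def)
  with v obtain D' m' where "mtyped D' v (add_mset B (Gb' 0)) m'" "env_le D' D" "m' \<le> m"
    by (rule mtyped_submset)
  ultimately have "Suc (nb' + m') < n" "env_le ((Gb' \<circ> Suc) + D') G"
    and "typed ((Gb' \<circ> Suc) + D') (Sub s' v) A (Suc (nb' + m'))"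
    using G typed_Sub[OF s'] by (auto intro: env_le_add_mono env_le_comp_Suc)
  then show ?thesis by blast
qed

lemma typed_plugW_shrinks:
  assumes "\<And>G A n. typed G t A n \<Longrightarrow> \<exists>G' n'. n' < n \<and> env_le G' G \<and> typed G' t' A n'"
  shows "typed G (plugW W t) A n \<Longrightarrow> \<exists>G' n'. n' < n \<and> env_le G' G \<and> typed G' (plugW W t') A n'"
proof (induction W arbitrary: G A n)
  case Hole
  then show ?case using assms by simp
next
  case (AppL W v)
  then obtain G1 M n1 D B m where G: "G = G1 + D" "n = Suc (n1 + m)"
    and "typed G1 (plugW W t) (Arr M A) n1" and v: "mtyped D v (add_mset B M) m"
    by (auto elim: typed_AppE)
  with AppL.IH obtain G1' n1' where "n1' < n1" "env_le G1' G1"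
    and "typed G1' (plugW W t') (Arr M A) n1'"
    by blast
  with typed_App[OF _ v] G show ?case
    by (metis add_Suc add_less_mono1 env_le_add_mono env_le_refl not_less_eq plugW.simps(2))
next
  case (AppR v W)
  then obtain G1 M n1 D B m where G: "G = G1 + D" "n = Suc (n1 + m)"
    and v: "typed G1 v (Arr M A) n1" and "mtyped D (plugW W t) (add_mset B M) m"
    by (auto elim: typed_AppE)
  from mtyped_shrinks[of "plugW W t" "plugW W t'", OF AppR.IH this(4)]
  obtain D' m' where "add_mset B M \<noteq> {#} \<longrightarrow> m' < m" "env_le D' D"
    "mtyped D' (plugW W t') (add_mset B M) m'"
    by blast
  with typed_App[OF v] G show ?case
    by (metis add_less_mono1 add_mset_not_empty env_le_add_mono env_le_refl nat_add_left_cancel_less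
        not_less_eq plugW.simps(3))
next
  case (SubArg v W)
  then obtain Gb nb D B m where G: "G = (Gb \<circ> Suc) + D" "n = Suc (nb + m)"
    and v: "typed Gb v A nb" and "mtyped D (plugW W t) (add_mset B (Gb 0)) m"
    by (auto elim: typed_SubE)
  from mtyped_shrinks[of "plugW W t" "plugW W t'", OF SubArg.IH this(4)]
  obtain D' m' where "add_mset B (Gb 0) \<noteq> {#} \<longrightarrow> m' < m" "env_le D' D"
    "mtyped D' (plugW W t') (add_mset B (Gb 0)) m'"
    by blast
  with typed_Sub[OF v] G show ?case
    by (metis add_mset_not_empty env_le_add_mono env_le_refl nat_add_left_cancel_less
        not_less_eq plugW.simps(4))
next
  case (SubBody W v)
  then have "typed G (Sub (plugW W t) v) A n" by simp
  from typed_Sub_body_shrinks[OF this SubBody.IH] show ?case by simp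
qed

lemma mtyped_expands:
  assumes "\<And>G A n. typed G t' A n \<Longrightarrow> \<exists>n'. typed G t A n'"
  shows "mtyped D t' M m \<Longrightarrow> \<exists>m'. mtyped D t M m'"
proof (induction rule: mtyped_induct)
  case empty
  show ?case using mtyped_empty by blast
next
  case (add G A n D M m)
  with assms show ?case by (meson mtyped_add)
qed

lemma typed_plugW_expands:
  assumes "\<And>G A n. typed G t' A n \<Longrightarrow> \<exists>n'. typed G t A n'"
  shows "typed G (plugW W t') A n \<Longrightarrow> \<exists>n'. typed G (plugW W t) A n'"
proof (induction W arbitrary: G A n)
  case Hole
  then show ?case using assms by simp
next
  case (AppL W v)
  then obtain G1 M n1 D B m where G: "G = G1 + D"
    and "typed G1 (plugW W t') (Arr M A) n1" and v: "mtyped D v (add_mset B M) m"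
    by (auto elim: typed_AppE)
  with AppL.IH obtain n1' where "typed G1 (plugW W t) (Arr M A) n1'" by blast
  from typed_App[OF this v] show ?case unfolding G by auto
next
  case (AppR v W)
  then obtain G1 M n1 D B m where G: "G = G1 + D"
    and v: "typed G1 v (Arr M A) n1" and "mtyped D (plugW W t') (add_mset B M) m"
    by (auto elim: typed_AppE)
  with mtyped_expands[of "plugW W t'" "plugW W t"] AppR.IH
  obtain m' where "mtyped D (plugW W t) (add_mset B M) m'" by blast
  from typed_App[OF v this] show ?case unfolding G by auto
next
  case (SubArg v W)
  then obtain Gb nb D B m where G: "G = (Gb \<circ> Suc) + D"
    and v: "typed Gb v A nb" and "mtyped D (plugW W t') (add_mset B (Gb 0)) m"
    by (auto elim: typed_SubE)
  with mtyped_expands[of "plugW W t'" "plugW W t"] SubArg.IH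
  obtain m' where "mtyped D (plugW W t) (add_mset B (Gb 0)) m'" by blast
  from typed_Sub[OF v this] show ?case unfolding G by auto
next
  case (SubBody W v)
  then obtain Gb nb D B m where G: "G = (Gb \<circ> Suc) + D"
    and "typed Gb (plugW W t') A nb" and v: "mtyped D v (add_mset B (Gb 0)) m"
    by (auto elim: typed_SubE)
  with SubBody.IH obtain nb' where "typed Gb (plugW W t) A nb'" by blast
  from typed_Sub[OF this v] show ?case unfolding G by auto
qed

lemma wstep_typed_shrinks:
  assumes "wstep t t'" "typed G t A n"
  obtains G' n' where "n' < n" "typed G' t' A n'"
  using assms(1)
proof cases
  case (1 s s' W)
  have "\<exists>G' n'. n' < n \<and> env_le G' G \<and> typed G' (plugW W s') A n'"
    using typed_plugW_shrinks[of s s'] root_step_typed_shrinks[OF 1(3)] assms(2) 1(1) by blast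
  with 1 that show ?thesis by blast
qed

lemma wstep_typed_expands:
  assumes "wstep t t'" "typed G t' A n"
  obtains n' where "typed G t A n'"
  using assms(1)
proof cases
  case (1 s s' W)
  have "\<exists>n'. typed G (plugW W s) A n'"
    using typed_plugW_expands[of s' s] root_step_typed_expands[OF 1(3)] assms(2) 1(2) by blast
  with 1 that show ?thesis by blast
qed

section \<open>Typability of normal forms\<close>

fun weak_occ :: "nat \<Rightarrow> trm \<Rightarrow> bool" where
  "weak_occ i (Var j) \<longleftrightarrow> i = j"
| "weak_occ i (Lam t) \<longleftrightarrow> False"
| "weak_occ i (App t u) \<longleftrightarrow> weak_occ i t \<or> weak_occ i u"
| "weak_occ i (Sub t u) \<longleftrightarrow> weak_occ (Suc i) t \<or> weak_occ i u"

fun is_answer :: "trm \<Rightarrow> bool" where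
  "is_answer (Lam t) \<longleftrightarrow> True"
| "is_answer (Sub t u) \<longleftrightarrow> is_answer t"
| "is_answer _ \<longleftrightarrow> False"

lemma weak_occ_plugW: "weak_occ i t \<Longrightarrow> \<exists>W. t = plugW W (Var (depthW W + i))"
proof (induction t arbitrary: i)
  case (Var j)
  then show ?case by (intro exI[of _ Hole]) simp
next
  case (App t u)
  then consider "weak_occ i t" | "weak_occ i u" by auto
  then show ?case
  proof cases
    case 1
    with App.IH(1) obtain W where "t = plugW W (Var (depthW W + i))" by blast
    then show ?thesis by (intro exI[of _ "AppL W u"]) simp
  next
    case 2
    with App.IH(2) obtain W where "u = plugW W (Var (depthW W + i))" by blast
    then show ?thesis by (intro exI[of _ "AppR t W"]) simp
  qed
next
  case (Sub t u)
  then consider "weak_occ (Suc i) t" | "weak_occ i u" by auto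
  then show ?case
  proof cases
    case 1
    with Sub.IH(1) obtain W where "t = plugW W (Var (depthW W + Suc i))" by blast
    then show ?thesis by (intro exI[of _ "SubBody W u"]) simp
  next
    case 2
    with Sub.IH(2) obtain W where "u = plugW W (Var (depthW W + i))" by blast
    then show ?thesis by (intro exI[of _ "SubArg t W"]) simp
  qed
qed simp

lemma is_answer_plugS: "is_answer t \<Longrightarrow> \<exists>S s. t = plugS S (Lam s)"
proof (induction t)
  case (Lam s)
  have "Lam s = plugS [] (Lam s)" by simp
  then show ?case by blast
next
  case (Sub t u)
  then obtain S s where "t = plugS S (Lam s)" by auto
  then have "Sub t u = plugS (u # S) (Lam s)" by simp
  then show ?case by blast
qed simp_all

lemma wstep_App_Sub_cong:
  assumes "wstep t t'"
  shows "wstep (App t v) (App t' v)" "wstep (App v t) (App v t')"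
    and "wstep (Sub v t) (Sub v t')" "wstep (Sub t v) (Sub t' v)"
proof -
  from assms obtain s s' W where "t = plugW W s" "t' = plugW W s'" "root_step s s'"
    by (cases rule: wstep.cases) blast
  then show "wstep (App t v) (App t' v)" "wstep (App v t) (App v t')"
    and "wstep (Sub v t) (Sub v t')" "wstep (Sub t v) (Sub t' v)"
    using wstep.intros[of s s' "AppL W v"] wstep.intros[of s s' "AppR v W"]
      wstep.intros[of s s' "SubArg v W"] wstep.intros[of s s' "SubBody W v"]
    by simp_all
qed

lemma root_step_wstep: "root_step t t' \<Longrightarrow> wstep t t'"
  using wstep.intros[of t t' Hole] by simp

lemma normal_w_AppD:
  assumes "normal_w (App t u)"
  shows "normal_w t" "normal_w u" "\<not> is_answer t"
proof -
  show "normal_w t" "normal_w u"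
    using assms wstep_App_Sub_cong(1,2) unfolding normal_w_def by blast+
  show "\<not> is_answer t"
  proof
    assume "is_answer t"
    then obtain S s where "t = plugS S (Lam s)" by (blast dest: is_answer_plugS)
    with root_step_wstep[OF rule_m[of S s u]] assms show False
      unfolding normal_w_def by blast
  qed
qed

lemma normal_w_SubD:
  assumes "normal_w (Sub t u)"
  shows "normal_w t" "normal_w u" "\<not> weak_occ 0 t"
proof -
  show "normal_w t" "normal_w u"
    using assms wstep_App_Sub_cong(3,4) unfolding normal_w_def by blast+
  show "\<not> weak_occ 0 t"
  proof
    assume "weak_occ 0 t"
    then obtain W where "t = plugW W (Var (depthW W))" by (auto dest: weak_occ_plugW)
    with root_step_wstep[OF rule_e[of W u]] assms show False
      unfolding normal_w_def by blast
  qed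
qed

text \<open>The condition on \<open>G\<close> carries the induction through \<open>Sub\<close>: the body of a normal
  explicit substitution has no weak occurrence of the bound index, so its typing leaves that index
  untyped and the argument needs only the type \<open>Star\<close>.\<close>

lemma normal_w_typed:
  "normal_w t \<Longrightarrow> A = Star \<or> \<not> is_answer t \<Longrightarrow>
    \<exists>G n. typed G t A n \<and> (\<forall>j. G j \<noteq> {#} \<longrightarrow> weak_occ j t)"
proof (induction t arbitrary: A)
  case (Var i)
  have "\<forall>j. (0(i := {#A#}) :: env) j \<noteq> {#} \<longrightarrow> weak_occ j (Var i)"
    by (simp add: zero_fun_apply)
  with typed_Var[of i A] show ?case by blast
next
  case (Lam s)
  then have "A = Star" by simp
  moreover have "\<forall>j. (0 :: env) j \<noteq> {#} \<longrightarrow> weak_occ j (Lam s)" by (simp add: zero_fun_apply)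
  ultimately show ?case using typed_Star[of s] by blast
next
  case (App t u)
  from App.IH(1)[of "Arr {#} A"] App.prems normal_w_AppD[OF App.prems(1)]
  obtain Gt nt where t: "typed Gt t (Arr {#} A) nt" "\<forall>j. Gt j \<noteq> {#} \<longrightarrow> weak_occ j t"
    by auto
  from App.IH(2)[of Star] normal_w_AppD(2)[OF App.prems(1)]
  obtain Gu nu where u: "typed Gu u Star nu" "\<forall>j. Gu j \<noteq> {#} \<longrightarrow> weak_occ j u"
    by auto
  from typed_App[OF t(1), of Gu u Star nu] u(1) have "typed (Gt + Gu) (App t u) A (Suc (nt + nu))"
    by (simp add: mtyped_single_iff)
  moreover have "\<forall>j. (Gt + Gu) j \<noteq> {#} \<longrightarrow> weak_occ j (App t u)"
    using t(2) u(2) by (auto simp: plus_fun_apply)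
  ultimately show ?case by blast
next
  case (Sub t u)
  from Sub.IH(1)[of A] Sub.prems normal_w_SubD[OF Sub.prems(1)]
  obtain Gt nt where t: "typed Gt t A nt" "\<forall>j. Gt j \<noteq> {#} \<longrightarrow> weak_occ j t"
    by auto
  from Sub.IH(2)[of Star] normal_w_SubD(2)[OF Sub.prems(1)]
  obtain Gu nu where u: "typed Gu u Star nu" "\<forall>j. Gu j \<noteq> {#} \<longrightarrow> weak_occ j u"
    by auto
  have "Gt 0 = {#}" using t(2) normal_w_SubD(3)[OF Sub.prems(1)] by blast
  with u(1) have "mtyped Gu u (add_mset Star (Gt 0)) nu" by (simp add: mtyped_single_iff)
  from typed_Sub[OF t(1) this] have "typed ((Gt \<circ> Suc) + Gu) (Sub t u) A (Suc (nt + nu))" .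
  moreover have "\<forall>j. ((Gt \<circ> Suc) + Gu) j \<noteq> {#} \<longrightarrow> weak_occ j (Sub t u)"
    using t(2) u(2) by (auto simp: plus_fun_apply)
  ultimately show ?case by blast
qed

section \<open>Normalization\<close>

lemma WN_w_typed:
  assumes "WN_w t"
  obtains G n where "typed G t Star n"
proof -
  from assms obtain u where "wstep\<^sup>*\<^sup>* t u" "normal_w u" unfolding WN_w_def by blast
  from normal_w_typed[OF this(2)] obtain G n where "typed G u Star n" by blast
  with \<open>wstep\<^sup>*\<^sup>* t u\<close> have "\<exists>n. typed G t Star n"
  proof (induction arbitrary: n rule: converse_rtranclp_induct)
    case base
    then show ?case by blast
  next
    case (step t t')
    then obtain n' where "typed G t' Star n'" by blast
    with step.hyps(1) obtain n'' where "typed G t Star n''" by (rule wstep_typed_expands)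
    then show ?case by blast
  qed
  with that show ?thesis by blast
qed

lemma SN_w_intro:
  assumes "\<And>u. wstep t u \<Longrightarrow> SN_w u"
  shows "SN_w t"
  unfolding SN_w_def
proof
  assume "\<exists>f. f 0 = t \<and> (\<forall>n. wstep (f n) (f (Suc n)))"
  then obtain f where f: "f 0 = t" "\<And>n. wstep (f n) (f (Suc n))" by blast
  have "wstep t (f (Suc 0))" using f(2)[of 0] f(1) by simp
  with assms have "SN_w (f (Suc 0))" by blast
  moreover have "\<exists>g. g 0 = f (Suc 0) \<and> (\<forall>n. wstep (g n) (g (Suc n)))"
    using f(2) by (intro exI[of _ "\<lambda>n. f (Suc n)"]) simp
  ultimately show False unfolding SN_w_def by blast
qed

lemma typed_SN_w: "typed G t A n \<Longrightarrow> SN_w t"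
proof (induction n arbitrary: G t rule: less_induct)
  case (less n)
  show ?case
  proof (rule SN_w_intro)
    fix u
    assume "wstep t u"
    from this less.prems obtain G' n' where "n' < n" "typed G' u A n'"
      by (rule wstep_typed_shrinks)
    then show "SN_w u" by (rule less.IH)
  qed
qed

lemma SN_w_WN_w:
  assumes "SN_w t"
  shows "WN_w t"
proof (rule ccontr)
  let ?P = "\<lambda>n s. \<not> WN_w s \<and> (n = 0 \<longrightarrow> s = t)"
  assume "\<not> WN_w t"
  then have "\<exists>s. ?P 0 s" by blast
  moreover have "\<exists>u. ?P (Suc n) u \<and> wstep s u" if "?P n s" for n s
  proof -
    from that obtain u where u: "wstep s u" unfolding WN_w_def normal_w_def by blast
    have "\<not> WN_w u"
    proof
      assume "WN_w u"
      with u have "WN_w s" unfolding WN_w_def by (blast intro: converse_rtranclp_into_rtranclp)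
      with that show False by blast
    qed
    with u show ?thesis by blast
  qed
  ultimately obtain f where "\<And>n. ?P n (f n) \<and> wstep (f n) (f (Suc n))"
    using dependent_nat_choice[of ?P "\<lambda>_. wstep"] by blast
  with assms show False unfolding SN_w_def by blast
qed

theorem corollary6p6:
  fixes t :: trm
  shows "WN_w t \<longleftrightarrow> SN_w t"
proof
  assume "WN_w t"
  then obtain G n where "typed G t Star n" by (rule WN_w_typed)
  then show "SN_w t" by (rule typed_SN_w)
next
  assume "SN_w t"
  then show "WN_w t" by (rule SN_w_WN_w)
qed

end
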